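(* Let $t\mapsto\zeta(t)=(\xi(t),\eta(t))$, $t\in I$, be a solution of the alternative system (Alt) such that for all $t\in I$: $f_{\mathrm{holdup}}'(L^j(t))\neq0$ for $j=1,\dots,S-1$ and $\sum_{i=1}^C\partial_Tf_{\mathrm{vle},i}(P(t),T^j(t),\mathbf x^j(t))\neq0$ for $j=1,\dots,S$. Then the Jacobian $D_\eta g(\zeta(t))$ is non-singular for every $t\in I$ if and only if for every $t\in I$ $-\epsilon f_{\mathrm{hl}}(T^S,\mathbf x^S)-\epsilon\,\mathbf a(P,T^S,\mathbf x^S)\cdot(\mathbf y^S-\mathbf x^S)-(1-\epsilon)f_{\mathrm{hl}}(T^{\mathrm{cond}},\mathbf y^S)+f_{\mathrm{hv}}(T^S,\mathbf y^S)\neq0$ and, for every $j\in\{S-1,\dots,1\}$, $-f_{\mathrm{hl}}(T^j,\mathbf x^j)-\mathbf a(P,T^j,\mathbf x^j)\cdot(\mathbf y^j-\mathbf x^j)+f_{\mathrm{hv}}(T^j,\mathbf y^j)\neq0$ (all quantities evaluated at time $t$).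
   Context: Fix integers $S\ge 2$, $C\ge 2$ and an interval $I\subset\mathbb R$. Given are real functions $f_{\mathrm{vle},i}(P,T,\mathbf x)$ ($i=1,\dots,C$) and $f_{\mathrm{hl}}(T,\mathbf x)$ that are twice continuously differentiable, and continuously differentiable $f_{\mathrm{hv}}(T,\mathbf y)$, $f_{\mathrm{holdup}}(L)$. Controls are continuously differentiable real functions $\epsilon,P,Q,T^{\mathrm{cond}}$ on $I$. State variables: $n^j,H^j,T^j,V^j$, $\mathbf x^j,\mathbf y^j\in\mathbb R^C$ ($j=1,\dots,S$), $L^j$ ($j=1,\dots,S-1$); a solution is a tuple of continuously differentiable state functions satisfying all equations at every $t\in I$. "$2\le j\le S-1$" marks middle-stage equations. Wherever $\sum_i\partial_Tf_{\mathrm{vle},i}(P,T,\mathbf x)\neq0$ define $\mathbf a(P,T,\mathbf x):=\nabla_{\mathbf x}f_{\mathrm{hl}}(T,\mathbf x)-\partial_Tf_{\mathrm{hl}}(T,\mathbf x)\frac{\sum_i\nabla_{\mathbf x}f_{\mathrm{vle},i}(P,T,\mathbf x)}{\sum_i\partial_Tf_{\mathrm{vle},i}(P,T,\mathbf x)}$, $b(P,T,\mathbf x):=-\partial_Tf_{\mathrm{hl}}(T,\mathbf x)\frac{\sum_i\partial_Pf_{\mathrm{vle},i}(P,T,\mathbf x)}{\sum_i\partial_Tf_{\mathrm{vle},i}(P,T,\mathbf x)}$. System (Alt) consists of (TM) $\dot n^1=L^1-V^1$; $\dot n^j=L^j-V^j-L^{j-1}+V^{j-1}$ ($2\le j\le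 S-1$); $\dot n^S=-\epsilon V^S-L^{S-1}+V^{S-1}$; (CM$_0$) for $i=1,\dots,C-1$: $\dot x_i^1=\big(L^1(x_i^2-x_i^1)-V^1(y_i^1-x_i^1)\big)/n^1$; $\dot x_i^j=\big(L^j(x_i^{j+1}-x_i^j)-V^j(y_i^j-x_i^j)+V^{j-1}(y_i^{j-1}-x_i^j)\big)/n^j$ ($2\le j\le S-1$); $\dot x_i^S=\big(\epsilon V^S(x_i^S-y_i^S)+V^{S-1}(y_i^{S-1}-x_i^S)\big)/n^S$; and the algebraic equations $g=0$ where (left minus right side): $\mathrm{aebal}^1=(L^1-V^1)f_{\mathrm{hl}}(T^1,\mathbf x^1)+\mathbf a(P,T^1,\mathbf x^1)\cdot\big(L^1(\mathbf x^2-\mathbf x^1)-V^1(\mathbf y^1-\mathbf x^1)\big)+n^1b(P,T^1,\mathbf x^1)\dot P-\big(L^1f_{\mathrm{hl}}(T^2,\mathbf x^2)-V^1f_{\mathrm{hv}}(T^1,\mathbf y^1)+Q\big)$; for $2\le j\le S-1$: $\mathrm{aebal}^j=(L^j-V^j-L^{j-1}+V^{j-1})f_{\mathrm{hl}}(T^j,\mathbf x^j)+\mathbf a(P,T^j,\mathbf x^j)\cdot\big(L^j(\mathbf x^{j+1}-\mathbf x^j)-V^j(\mathbf y^j-\mathbf x^j)+V^{j-1}(\mathbf y^{j-1}-\mathbf x^j)\big)+n^jb(P,T^j,\mathbf x^j)\dot P-\big(L^jf_{\mathrm{hl}}(T^{j+1},\mathbf x^{j+1})-V^jf_{\mathrm{hv}}(T^j,\mathbf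 y^j)-L^{j-1}f_{\mathrm{hl}}(T^j,\mathbf x^j)+V^{j-1}f_{\mathrm{hv}}(T^{j-1},\mathbf y^{j-1})\big)$; $\mathrm{aebal}^S=(-\epsilon V^S-L^{S-1}+V^{S-1})f_{\mathrm{hl}}(T^S,\mathbf x^S)+\mathbf a(P,T^S,\mathbf x^S)\cdot\big(-\epsilon V^S(\mathbf y^S-\mathbf x^S)+V^{S-1}(\mathbf y^{S-1}-\mathbf x^S)\big)+n^Sb(P,T^S,\mathbf x^S)\dot P-\big((1-\epsilon)V^Sf_{\mathrm{hl}}(T^{\mathrm{cond}},\mathbf y^S)-V^Sf_{\mathrm{hv}}(T^S,\mathbf y^S)-L^{S-1}f_{\mathrm{hl}}(T^S,\mathbf x^S)+V^{S-1}f_{\mathrm{hv}}(T^{S-1},\mathbf y^{S-1})\big)$; $\mathrm{ydef}_i^j=y_i^j-f_{\mathrm{vle},i}(P,T^j,\mathbf x^j)$, $\mathbf{ydef}^j=(\mathrm{ydef}^j_1,\dots,\mathrm{ydef}^j_C)$; $\mathrm{edef}^j=H^j-n^jf_{\mathrm{hl}}(T^j,\mathbf x^j)$; $\mathrm{ysum}^j=\sum_{i=1}^Cf_{\mathrm{vle},i}(P,T^j,\mathbf x^j)-1$; $\mathrm{xsum}^j=x_C^j-1+\sum_{i=1}^{C-1}x_i^j$; $\mathrm{hold}^j=n^j-f_{\mathrm{holdup}}(L^{j-1})$ ($j=2,\dots,S$); ordered as $g=(\mathrm{aebal}^S,\dots,\mathrm{aebal}^1,\mathbf{ydef}^1,\dots,\mathbf{ydef}^S,\mathrm{edef}^1,\dots,\mathrm{edef}^S,\mathrm{ysum}^1,\dots,\mathrm{ysum}^S,\mathrm{xsum}^1,\dots,\mathrm{xsum}^S,\mathrm{hold}^2,\dots,\mathrm{hold}^S)$.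 Differential variables $\xi=(n^1,\dots,n^S,\hat{\mathbf x}^1,\dots,\hat{\mathbf x}^S)$, $\hat{\mathbf x}^j=(x^j_1,\dots,x^j_{C-1})$; algebraic variables $\eta=(V^S,\dots,V^1,\mathbf y^1,\dots,\mathbf y^S,H^1,\dots,H^S,T^1,\dots,T^S,x_C^1,\dots,x_C^S,L^1,\dots,L^{S-1})$. $D_\eta g$ is the Jacobian of $g$ with respect to $\eta$ (with $\xi$ and controls held fixed). *)

theory Defs
  imports "HOL-Analysis.Analysis"
begin

definition C1_fun :: "('a::real_normed_vector \<Rightarrow> 'b::real_normed_vector) \<Rightarrow> bool" where
  "C1_fun f \<longleftrightarrow> (\<exists>f'. (\<forall>z. (f has_derivative blinfun_apply (f' z)) (at z)) \<and> continuous_on UNIV f')"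

definition C2_fun :: "('a::real_normed_vector \<Rightarrow> 'b::real_normed_vector) \<Rightarrow> bool" where
  "C2_fun f \<longleftrightarrow> (\<exists>f'. (\<forall>z. (f has_derivative blinfun_apply (f' z)) (at z)) \<and> C1_fun f')"

definition C1_on :: "real set \<Rightarrow> (real \<Rightarrow> 'b::real_normed_vector) \<Rightarrow> bool" where
  "C1_on I f \<longleftrightarrow> (\<exists>f'. (\<forall>t\<in>I. (f has_vector_derivative f' t) (at t within I)) \<and> continuous_on I f')"

definition tder :: "real set \<Rightarrow> (real \<Rightarrow> 'b::real_normed_vector) \<Rightarrow> real \<Rightarrow> 'b" where
  "tder I f t = vector_derivative f (at t within I)"

definition pT_vle :: "('c::finite \<Rightarrow> real \<Rightarrow> real \<Rightarrow> real^'c \<Rightarrow> real) \<Rightarrow> 'c \<Rightarrow> real \<Rightarrow> real \<Rightarrow> real^'c \<Rightarrow> real" where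
  "pT_vle fvle i P T x = deriv (\<lambda>T'. fvle i P T' x) T"

definition pP_vle :: "('c::finite \<Rightarrow> real \<Rightarrow> real \<Rightarrow> real^'c \<Rightarrow> real) \<Rightarrow> 'c \<Rightarrow> real \<Rightarrow> real \<Rightarrow> real^'c \<Rightarrow> real" where
  "pP_vle fvle i P T x = deriv (\<lambda>P'. fvle i P' T x) P"

definition grad_vle :: "('c::finite \<Rightarrow> real \<Rightarrow> real \<Rightarrow> real^'c \<Rightarrow> real) \<Rightarrow> 'c \<Rightarrow> real \<Rightarrow> real \<Rightarrow> real^'c \<Rightarrow> real^'c" where
  "grad_vle fvle i P T x = (\<chi> k. deriv (\<lambda>s. fvle i P T (x + s *\<^sub>R axis k 1)) 0)"

definition pT_hl :: "(real \<Rightarrow> real^'c::finite \<Rightarrow> real) \<Rightarrow> real \<Rightarrow> real^'c \<Rightarrow> real" where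
  "pT_hl fhl T x = deriv (\<lambda>T'. fhl T' x) T"

definition grad_hl :: "(real \<Rightarrow> real^'c::finite \<Rightarrow> real) \<Rightarrow> real \<Rightarrow> real^'c \<Rightarrow> real^'c" where
  "grad_hl fhl T x = (\<chi> k. deriv (\<lambda>s. fhl T (x + s *\<^sub>R axis k 1)) 0)"

definition avec :: "('c::finite \<Rightarrow> real \<Rightarrow> real \<Rightarrow> real^'c \<Rightarrow> real) \<Rightarrow> (real \<Rightarrow> real^'c \<Rightarrow> real)
    \<Rightarrow> real \<Rightarrow> real \<Rightarrow> real^'c \<Rightarrow> real^'c" where
  "avec fvle fhl P T x = grad_hl fhl T x
     - (pT_hl fhl T x / (\<Sum>i\<in>UNIV. pT_vle fvle i P T x)) *\<^sub>R (\<Sum>i\<in>UNIV. grad_vle fvle i P T x)"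

definition bfun :: "('c::finite \<Rightarrow> real \<Rightarrow> real \<Rightarrow> real^'c \<Rightarrow> real) \<Rightarrow> (real \<Rightarrow> real^'c \<Rightarrow> real)
    \<Rightarrow> real \<Rightarrow> real \<Rightarrow> real^'c \<Rightarrow> real" where
  "bfun fvle fhl P T x = - pT_hl fhl T x * (\<Sum>i\<in>UNIV. pP_vle fvle i P T x) / (\<Sum>i\<in>UNIV. pT_vle fvle i P T x)"

text \<open>Labels of the algebraic variables eta: V^j, y_i^j, H^j, T^j, x_C^j, L^j.\<close>
datatype 'c avar = VV nat | YV nat 'c | HV nat | TV nat | XCV nat | LV nat

datatype 'c eqn = AEBAL nat | YDEF nat 'c | EDEF nat | YSUM nat | XSUM nat | HOLD nat

definition Vars :: "nat \<Rightarrow> ('c::finite) avar set" where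
  "Vars S = VV ` {1..S} \<union> (\<lambda>(j,i). YV j i) ` ({1..S} \<times> UNIV) \<union> HV ` {1..S} \<union> TV ` {1..S}
           \<union> XCV ` {1..S} \<union> LV ` {1..S-1}"

definition Eqs :: "nat \<Rightarrow> ('c::finite) eqn set" where
  "Eqs S = AEBAL ` {1..S} \<union> (\<lambda>(j,i). YDEF j i) ` ({1..S} \<times> UNIV) \<union> EDEF ` {1..S} \<union> YSUM ` {1..S}
           \<union> XSUM ` {1..S} \<union> HOLD ` {2..S}"

text \<open>Full liquid composition x^j: components other than the distinguished component cC
  (the "C-th" one) come from the differential variables, component cC from eta.\<close>
definition xst :: "'c::finite \<Rightarrow> (nat \<Rightarrow> real^'c) \<Rightarrow> ('c avar \<Rightarrow> real) \<Rightarrow> nat \<Rightarrow> real^'c" where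
  "xst cC xh \<eta> j = (\<chi> i. if i = cC then \<eta> (XCV j) else xh j $ i)"

definition yst :: "('c::finite avar \<Rightarrow> real) \<Rightarrow> nat \<Rightarrow> real^'c" where
  "yst \<eta> j = (\<chi> i. \<eta> (YV j i))"

text \<open>The algebraic part g of system (Alt), as a function of the algebraic variables eta,
  with the differential variables (n, xh) and the control values (including dP/dt = Pd) fixed.\<close>
definition gfun :: "nat \<Rightarrow> 'c::finite \<Rightarrow> ('c \<Rightarrow> real \<Rightarrow> real \<Rightarrow> real^'c \<Rightarrow> real)
    \<Rightarrow> (real \<Rightarrow> real^'c \<Rightarrow> real) \<Rightarrow> (real \<Rightarrow> real^'c \<Rightarrow> real) \<Rightarrow> (real \<Rightarrow> real)
    \<Rightarrow> real \<Rightarrow> real \<Rightarrow> real \<Rightarrow> real \<Rightarrow> real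
    \<Rightarrow> (nat \<Rightarrow> real) \<Rightarrow> (nat \<Rightarrow> real^'c) \<Rightarrow> ('c avar \<Rightarrow> real) \<Rightarrow> 'c eqn \<Rightarrow> real" where
  "gfun S cC fvle fhl fhv fhold eps P Pd Q Tc n xh \<eta> e =
    (let V = (\<lambda>j. \<eta> (VV j)); y = yst \<eta>; H = (\<lambda>j. \<eta> (HV j)); T = (\<lambda>j. \<eta> (TV j));
         L = (\<lambda>j. \<eta> (LV j)); x = xst cC xh \<eta>;
         a = (\<lambda>j. avec fvle fhl P (T j) (x j)); b = (\<lambda>j. bfun fvle fhl P (T j) (x j))
     in case e of
       AEBAL j \<Rightarrow>
         (if j = 1 then
            (L 1 - V 1) * fhl (T 1) (x 1)
            + a 1 \<bullet> (L 1 *\<^sub>R (x 2 - x 1) - V 1 *\<^sub>R (y 1 - x 1))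
            + n 1 * b 1 * Pd
            - (L 1 * fhl (T 2) (x 2) - V 1 * fhv (T 1) (y 1) + Q)
          else if j = S then
            (- eps * V S - L (S-1) + V (S-1)) * fhl (T S) (x S)
            + a S \<bullet> (- (eps * V S) *\<^sub>R (y S - x S) + V (S-1) *\<^sub>R (y (S-1) - x S))
            + n S * b S * Pd
            - ((1 - eps) * V S * fhl Tc (y S) - V S * fhv (T S) (y S)
               - L (S-1) * fhl (T S) (x S) + V (S-1) * fhv (T (S-1)) (y (S-1)))
          else
            (L j - V j - L (j-1) + V (j-1)) * fhl (T j) (x j)
            + a j \<bullet> (L j *\<^sub>R (x (j+1) - x j) - V j *\<^sub>R (y j - x j) + V (j-1) *\<^sub>R (y (j-1) - x j))
            + n j * b j * Pd
            - (L j * fhl (T (j+1)) (x (j+1)) - V j * fhv (T j) (y j)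
               - L (j-1) * fhl (T j) (x j) + V (j-1) * fhv (T (j-1)) (y (j-1))))
     | YDEF j i \<Rightarrow> y j $ i - fvle i P (T j) (x j)
     | EDEF j \<Rightarrow> H j - n j * fhl (T j) (x j)
     | YSUM j \<Rightarrow> (\<Sum>i\<in>UNIV. fvle i P (T j) (x j)) - 1
     | XSUM j \<Rightarrow> \<eta> (XCV j) - 1 + (\<Sum>i\<in>UNIV - {cC}. xh j $ i)
     | HOLD j \<Rightarrow> n j - fhold (L (j-1)))"

definition jac :: "(('c avar \<Rightarrow> real) \<Rightarrow> 'c eqn \<Rightarrow> real) \<Rightarrow> ('c avar \<Rightarrow> real) \<Rightarrow> 'c eqn \<Rightarrow> 'c avar \<Rightarrow> real" where
  "jac G \<eta> e v = deriv (\<lambda>s. G (\<eta>(v := \<eta> v + s)) e) 0"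

definition nonsingular :: "'r set \<Rightarrow> 'k set \<Rightarrow> ('r \<Rightarrow> 'k \<Rightarrow> real) \<Rightarrow> bool" where
  "nonsingular R K M \<longleftrightarrow> (\<exists>N :: 'k \<Rightarrow> 'r \<Rightarrow> real.
      (\<forall>r\<in>R. \<forall>r'\<in>R. (\<Sum>k\<in>K. M r k * N k r') = (if r = r' then 1 else 0)) \<and>
      (\<forall>k\<in>K. \<forall>k'\<in>K. (\<Sum>r\<in>R. N k r * M r k') = (if k = k' then 1 else 0)))"

definition eta_at :: "(nat \<Rightarrow> real \<Rightarrow> real) \<Rightarrow> (nat \<Rightarrow> real \<Rightarrow> real^'c::finite) \<Rightarrow> (nat \<Rightarrow> real \<Rightarrow> real)
    \<Rightarrow> (nat \<Rightarrow> real \<Rightarrow> real) \<Rightarrow> (nat \<Rightarrow> real \<Rightarrow> real^'c) \<Rightarrow> (nat \<Rightarrow> real \<Rightarrow> real) \<Rightarrow> 'c \<Rightarrow> real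
    \<Rightarrow> 'c avar \<Rightarrow> real" where
  "eta_at V y H T x L cC t v = (case v of VV j \<Rightarrow> V j t | YV j i \<Rightarrow> y j t $ i | HV j \<Rightarrow> H j t
      | TV j \<Rightarrow> T j t | XCV j \<Rightarrow> x j t $ cC | LV j \<Rightarrow> L j t)"

definition alt_solution :: "real set \<Rightarrow> nat \<Rightarrow> 'c::finite \<Rightarrow> ('c \<Rightarrow> real \<Rightarrow> real \<Rightarrow> real^'c \<Rightarrow> real)
    \<Rightarrow> (real \<Rightarrow> real^'c \<Rightarrow> real) \<Rightarrow> (real \<Rightarrow> real^'c \<Rightarrow> real) \<Rightarrow> (real \<Rightarrow> real)
    \<Rightarrow> (real \<Rightarrow> real) \<Rightarrow> (real \<Rightarrow> real) \<Rightarrow> (real \<Rightarrow> real) \<Rightarrow> (real \<Rightarrow> real)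
    \<Rightarrow> (nat \<Rightarrow> real \<Rightarrow> real) \<Rightarrow> (nat \<Rightarrow> real \<Rightarrow> real) \<Rightarrow> (nat \<Rightarrow> real \<Rightarrow> real) \<Rightarrow> (nat \<Rightarrow> real \<Rightarrow> real)
    \<Rightarrow> (nat \<Rightarrow> real \<Rightarrow> real^'c) \<Rightarrow> (nat \<Rightarrow> real \<Rightarrow> real^'c) \<Rightarrow> (nat \<Rightarrow> real \<Rightarrow> real) \<Rightarrow> bool" where
  "alt_solution I S cC fvle fhl fhv fhold eps P Q Tc n H T V x y L \<longleftrightarrow>
    (\<forall>j\<in>{1..S}. C1_on I (n j) \<and> C1_on I (H j) \<and> C1_on I (T j) \<and> C1_on I (V j)
                 \<and> C1_on I (x j) \<and> C1_on I (y j)) \<and>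
    (\<forall>j\<in>{1..S-1}. C1_on I (L j)) \<and>
    (\<forall>t\<in>I.
      \<comment> \<open>(TM)\<close>
      tder I (n 1) t = L 1 t - V 1 t \<and>
      (\<forall>j\<in>{2..S-1}. tder I (n j) t = L j t - V j t - L (j-1) t + V (j-1) t) \<and>
      tder I (n S) t = - eps t * V S t - L (S-1) t + V (S-1) t \<and>
      \<comment> \<open>(CM_0), for the components i other than the distinguished C-th one\<close>
      (\<forall>i. i \<noteq> cC \<longrightarrow>
        tder I (\<lambda>s. x 1 s $ i) t
          = (L 1 t * (x 2 t $ i - x 1 t $ i) - V 1 t * (y 1 t $ i - x 1 t $ i)) / n 1 t \<and>
        (\<forall>j\<in>{2..S-1}. tder I (\<lambda>s. x j s $ i) t
          = (L j t * (x (j+1) t $ i - x j t $ i) - V j t * (y j t $ i - x j t $ i)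
             + V (j-1) t * (y (j-1) t $ i - x j t $ i)) / n j t) \<and>
        tder I (\<lambda>s. x S s $ i) t
          = (eps t * V S t * (x S t $ i - y S t $ i) + V (S-1) t * (y (S-1) t $ i - x S t $ i)) / n S t) \<and>
      \<comment> \<open>algebraic equations g = 0\<close>
      (\<forall>e\<in>Eqs S. gfun S cC fvle fhl fhv fhold (eps t) (P t) (tder I P t) (Q t) (Tc t)
                    (\<lambda>j. n j t) (\<lambda>j. x j t) (eta_at V y H T x L cC t) e = 0))"

end

(* Gaussian elimination on the Jacobian.  Once the pivots of the earlier rows are removed, each
   of the rows xsum, hold, ysum, edef and ydef has a single non-zero entry, at x_C^j, L^(j-1),
   T^j, H^j and y_i^j respectively: these entries are 1, except -f_holdup'(L^(j-1)) and
   sum_i d_T f_vle,i, which are non-zero by hypothesis.  What remains is the square block of the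
   enthalpy balances against the vapour flows, which is lower triangular because aebal^j involves
   V^j and V^(j-1) only; its diagonal entries d aebal^j / d V^j are the expressions of the
   theorem. *)

theory Submission
  imports Defs
begin

lemma nonsingular_empty: "nonsingular {} {} M"
  unfolding nonsingular_def by simp

lemma sum_pivot_row:
  fixes M :: "'r \<Rightarrow> 'k \<Rightarrow> real"
  assumes "finite K" "p \<in> K" "\<forall>k\<in>K. k \<noteq> p \<longrightarrow> M r k = 0"
  shows "(\<Sum>k\<in>K. M r k * f k) = M r p * f p"
  using assms by (subst sum.remove[of K p]) simp_all

lemma nonsingular_pivot_row_necessary:
  fixes M :: "'r \<Rightarrow> 'k \<Rightarrow> real"
  assumes "finite R" "finite K" "r0 \<in> R" "k0 \<in> K"
    and row: "\<forall>k\<in>K. k \<noteq> k0 \<longrightarrow> M r0 k = 0"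
    and "nonsingular R K M"
  shows "M r0 k0 \<noteq> 0 \<and> nonsingular (R - {r0}) (K - {k0}) M"
proof -
  obtain N where right: "\<forall>r\<in>R. \<forall>r'\<in>R. (\<Sum>k\<in>K. M r k * N k r') = (if r = r' then 1 else 0)"
    and left: "\<forall>k\<in>K. \<forall>k'\<in>K. (\<Sum>r\<in>R. N k r * M r k') = (if k = k' then 1 else 0)"
    using assms(6) unfolding nonsingular_def by blast
  have row_times_N: "(\<Sum>k\<in>K. M r0 k * N k r') = M r0 k0 * N k0 r'" for r'
    using assms(2,4) row by (rule sum_pivot_row)
  have "M r0 k0 * N k0 r0 = 1"
    using right assms(3) row_times_N[of r0] by simp
  then have pivot: "M r0 k0 \<noteq> 0" by auto
  have N_k0: "N k0 r' = 0" if "r' \<in> R" "r' \<noteq> r0" for r'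
    using right assms(3) that row_times_N[of r'] pivot by auto
  have "nonsingular (R - {r0}) (K - {k0}) M"
    unfolding nonsingular_def
  proof (intro exI[of _ N] conjI ballI)
    fix r r' assume "r \<in> R - {r0}" "r' \<in> R - {r0}"
    then show "(\<Sum>k\<in>K - {k0}. M r k * N k r') = (if r = r' then 1 else 0)"
      using right N_k0 sum.remove[OF assms(2,4), of "\<lambda>k. M r k * N k r'"] by auto
  next
    fix k k' assume "k \<in> K - {k0}" "k' \<in> K - {k0}"
    then show "(\<Sum>r\<in>R - {r0}. N k r * M r k') = (if k = k' then 1 else 0)"
      using left row sum.remove[OF assms(1,3), of "\<lambda>r. N k r * M r k'"] by auto
  qed
  with pivot show ?thesis by blast
qed

text \<open>The inverse of a matrix whose row \<open>r0\<close> vanishes outside column \<open>k0\<close>, given an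
  inverse \<open>N'\<close> of the minor obtained by deleting row \<open>r0\<close> and column \<open>k0\<close>: in block form
  \<open>[c 0; u M']\<^sup>-\<^sup>1 = [1/c 0; -N' u/c N']\<close>.\<close>
definition bordered_inverse ::
    "('r \<Rightarrow> 'k \<Rightarrow> real) \<Rightarrow> ('k \<Rightarrow> 'r \<Rightarrow> real) \<Rightarrow> 'r set \<Rightarrow> 'r \<Rightarrow> 'k \<Rightarrow> 'k \<Rightarrow> 'r \<Rightarrow> real" where
  "bordered_inverse M N' R r0 k0 k r =
     (if k = k0 then (if r = r0 then 1 / M r0 k0 else 0)
      else if r = r0 then - (\<Sum>r'\<in>R - {r0}. N' k r' * M r' k0) / M r0 k0
      else N' k r)"

lemma bordered_inverse_right:
  fixes M :: "'r \<Rightarrow> 'k \<Rightarrow> real"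
  assumes "finite R" "finite K" "k0 \<in> K"
    and row: "\<forall>k\<in>K. k \<noteq> k0 \<longrightarrow> M r0 k = 0" and pivot: "M r0 k0 \<noteq> 0"
    and right: "\<forall>r\<in>R - {r0}. \<forall>r'\<in>R - {r0}.
                  (\<Sum>k\<in>K - {k0}. M r k * N' k r') = (if r = r' then 1 else 0)"
    and "r \<in> R" "r' \<in> R"
  shows "(\<Sum>k\<in>K. M r k * bordered_inverse M N' R r0 k0 k r') = (if r = r' then 1 else 0)"
proof -
  let ?N = "bordered_inverse M N' R r0 k0"
  have split: "(\<Sum>k\<in>K. M r k * ?N k r') = M r k0 * ?N k0 r' + (\<Sum>k\<in>K - {k0}. M r k * ?N k r')"
    using sum.remove[OF assms(2,3)] by blast
  consider "r = r0" | "r \<noteq> r0" "r' = r0" | "r \<noteq> r0" "r' \<noteq> r0" by blast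
  then show ?thesis
  proof cases
    case 1
    then show ?thesis
      using sum_pivot_row[where M = M and r = r0, OF assms(2,3) row] pivot
      by (auto simp: bordered_inverse_def)
  next
    case 2
    have "(\<Sum>k\<in>K - {k0}. M r k * ?N k r')
        = - (\<Sum>k\<in>K - {k0}. \<Sum>r''\<in>R - {r0}. M r k * N' k r'' * M r'' k0) / M r0 k0"
      using 2 by (simp add: bordered_inverse_def sum_distrib_left sum_divide_distrib sum_negf
          mult.assoc)
    also have "\<dots> = - (\<Sum>r''\<in>R - {r0}. (\<Sum>k\<in>K - {k0}. M r k * N' k r'') * M r'' k0) / M r0 k0"
      by (subst sum.swap) (simp add: sum_distrib_right)
    also have "\<dots> = - (\<Sum>r''\<in>R - {r0}. if r = r'' then M r'' k0 else 0) / M r0 k0"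
      using right 2 \<open>r \<in> R\<close> by (intro arg_cong[where f = "\<lambda>s. - s / _"] sum.cong) auto
    also have "\<dots> = - M r k0 / M r0 k0"
      using 2 \<open>r \<in> R\<close> assms(1) by simp
    finally show ?thesis
      using split 2 pivot by (simp add: bordered_inverse_def)
  next
    case 3
    then show ?thesis
      using split right \<open>r \<in> R\<close> \<open>r' \<in> R\<close> by (simp add: bordered_inverse_def)
  qed
qed

lemma bordered_inverse_left:
  fixes M :: "'r \<Rightarrow> 'k \<Rightarrow> real"
  assumes "finite R" "r0 \<in> R"
    and row: "\<forall>k\<in>K. k \<noteq> k0 \<longrightarrow> M r0 k = 0" and pivot: "M r0 k0 \<noteq> 0"
    and left: "\<forall>k\<in>K - {k0}. \<forall>k'\<in>K - {k0}.
                 (\<Sum>r\<in>R - {r0}. N' k r * M r k') = (if k = k' then 1 else 0)"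
    and "k \<in> K" "k' \<in> K"
  shows "(\<Sum>r\<in>R. bordered_inverse M N' R r0 k0 k r * M r k') = (if k = k' then 1 else 0)"
proof -
  let ?N = "bordered_inverse M N' R r0 k0"
  have split: "(\<Sum>r\<in>R. ?N k r * M r k') = ?N k r0 * M r0 k' + (\<Sum>r\<in>R - {r0}. ?N k r * M r k')"
    using sum.remove[OF assms(1,2)] by blast
  show ?thesis
  proof (cases "k = k0")
    case True
    then show ?thesis
      using split row pivot \<open>k' \<in> K\<close> by (auto simp: bordered_inverse_def)
  next
    case False
    then have "(\<Sum>r\<in>R - {r0}. ?N k r * M r k') = (\<Sum>r\<in>R - {r0}. N' k r * M r k')"
      by (intro sum.cong) (auto simp: bordered_inverse_def)
    then show ?thesis
      using split False left row pivot \<open>k \<in> K\<close> \<open>k' \<in> K\<close>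
      by (cases "k' = k0") (auto simp: bordered_inverse_def)
  qed
qed

lemma nonsingular_pivot_row_sufficient:
  fixes M :: "'r \<Rightarrow> 'k \<Rightarrow> real"
  assumes "finite R" "finite K" "r0 \<in> R" "k0 \<in> K"
    and "\<forall>k\<in>K. k \<noteq> k0 \<longrightarrow> M r0 k = 0" and "M r0 k0 \<noteq> 0"
    and "nonsingular (R - {r0}) (K - {k0}) M"
  shows "nonsingular R K M"
proof -
  obtain N' where
    "\<forall>r\<in>R - {r0}. \<forall>r'\<in>R - {r0}. (\<Sum>k\<in>K - {k0}. M r k * N' k r') = (if r = r' then 1 else 0)"
    "\<forall>k\<in>K - {k0}. \<forall>k'\<in>K - {k0}. (\<Sum>r\<in>R - {r0}. N' k r * M r k') = (if k = k' then 1 else 0)"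
    using assms(7) unfolding nonsingular_def by blast
  then show ?thesis
    unfolding nonsingular_def using assms(1-6)
    by (intro exI[of _ "bordered_inverse M N' R r0 k0"] conjI ballI
        bordered_inverse_right bordered_inverse_left) auto
qed

lemma nonsingular_pivot_row_iff:
  fixes M :: "'r \<Rightarrow> 'k \<Rightarrow> real"
  assumes "finite R" "finite K" "r0 \<in> R" "k0 \<in> K"
    and "\<forall>k\<in>K. k \<noteq> k0 \<longrightarrow> M r0 k = 0"
  shows "nonsingular R K M \<longleftrightarrow> M r0 k0 \<noteq> 0 \<and> nonsingular (R - {r0}) (K - {k0}) M"
  using assms nonsingular_pivot_row_necessary nonsingular_pivot_row_sufficient by metis

lemma nonsingular_pivot_rows_iff:
  fixes M :: "'r \<Rightarrow> 'k \<Rightarrow> real"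
  assumes "finite Rp" "finite R" "finite K" "Rp \<subseteq> R" "inj_on p Rp" "p ` Rp \<subseteq> K"
    and "\<forall>r\<in>Rp. M r (p r) \<noteq> 0" and "\<forall>r\<in>Rp. \<forall>k\<in>K. k \<noteq> p r \<longrightarrow> M r k = 0"
  shows "nonsingular R K M \<longleftrightarrow> nonsingular (R - Rp) (K - p ` Rp) M"
  using assms
proof (induction Rp arbitrary: R K rule: finite_induct)
  case empty
  then show ?case by simp
next
  case (insert r Rp)
  have "nonsingular R K M \<longleftrightarrow> nonsingular (R - {r}) (K - {p r}) M"
    using nonsingular_pivot_row_iff[of R K r "p r" M] insert.prems by auto
  also have "\<dots> \<longleftrightarrow> nonsingular (R - {r} - Rp) (K - {p r} - p ` Rp) M"
    using insert.prems insert.hyps by (intro insert.IH) (auto simp: image_iff)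
  also have "R - {r} - Rp = R - insert r Rp" by auto
  also have "K - {p r} - p ` Rp = K - p ` insert r Rp" by auto
  finally show ?case .
qed

lemma nonsingular_lower_triangular_iff:
  fixes M :: "'r \<Rightarrow> 'k \<Rightarrow> real" and row :: "nat \<Rightarrow> 'r" and col :: "nat \<Rightarrow> 'k"
  assumes "inj row" "inj col"
    and upper_zero: "\<And>j k. m \<le> j \<Longrightarrow> j < k \<Longrightarrow> k \<le> n \<Longrightarrow> M (row j) (col k) = 0"
  shows "nonsingular (row ` {m..n}) (col ` {m..n}) M \<longleftrightarrow> (\<forall>k\<in>{m..n}. M (row k) (col k) \<noteq> 0)"
proof -
  have "nonsingular (row ` {j..n}) (col ` {j..n}) M \<longleftrightarrow> (\<forall>k\<in>{j..n}. M (row k) (col k) \<noteq> 0)"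
    if "j \<le> Suc n" "m \<le> j" for j
    using that
  proof (induction j rule: inc_induct)
    case base
    then show ?case by (simp add: nonsingular_empty)
  next
    case (step j)
    have "nonsingular (row ` {j..n}) (col ` {j..n}) M \<longleftrightarrow>
        M (row j) (col j) \<noteq> 0 \<and> nonsingular (row ` {j..n} - {row j}) (col ` {j..n} - {col j}) M"
      using step.hyps step.prems upper_zero
      by (intro nonsingular_pivot_row_iff) (auto simp: inj_eq[OF assms(2)])
    also have "row ` {j..n} - {row j} = row ` {Suc j..n}"
      using assms(1) by (auto simp: inj_eq)
    also have "col ` {j..n} - {col j} = col ` {Suc j..n}"
      using assms(2) by (auto simp: inj_eq)
    also have "nonsingular (row ` {Suc j..n}) (col ` {Suc j..n}) M
        \<longleftrightarrow> (\<forall>k\<in>{Suc j..n}. M (row k) (col k) \<noteq> 0)"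
      using step by simp
    finally show ?case
      using Icc_eq_insert_lb_nat[of j n] step.hyps by simp
  qed
  then show ?thesis
    by (cases "m \<le> Suc n") (simp_all add: nonsingular_empty)
qed

lemma jac_eq_if_has_derivative:
  assumes "\<And>a. G (\<eta>(v := a)) e = \<phi> a" and "(\<phi> has_real_derivative D) (at (\<eta> v))"
  shows "jac G \<eta> e v = D"
proof -
  have "((\<lambda>s. \<phi> (\<eta> v + s)) has_real_derivative D) (at 0)"
    using DERIV_shift[of \<phi> D 0 "\<eta> v"] assms(2) by (simp add: add.commute)
  then show ?thesis
    unfolding jac_def assms(1) by (rule DERIV_imp_deriv)
qed

text \<open>An over-approximation of the algebraic variables on which an equation depends; the
  enthalpy balance of stage \<open>j\<close> involves the vapour flows \<open>V\<^sup>j\<close> and \<open>V\<^sup>j\<^sup>-\<^sup>1\<close> only.\<close>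
fun eqn_vars :: "'c eqn \<Rightarrow> 'c avar set" where
  "eqn_vars (AEBAL j) = - VV ` (- {j - 1, j})"
| "eqn_vars (YDEF j i) = {YV j i, TV j, XCV j}"
| "eqn_vars (EDEF j) = {HV j, TV j, XCV j}"
| "eqn_vars (YSUM j) = {TV j, XCV j}"
| "eqn_vars (XSUM j) = {XCV j}"
| "eqn_vars (HOLD j) = {LV (j - 1)}"

fun pivot_var :: "'c eqn \<Rightarrow> 'c avar" where
  "pivot_var (AEBAL j) = VV j"
| "pivot_var (YDEF j i) = YV j i"
| "pivot_var (EDEF j) = HV j"
| "pivot_var (YSUM j) = TV j"
| "pivot_var (XSUM j) = XCV j"
| "pivot_var (HOLD j) = LV (j - 1)"

lemma xst_update: "v \<noteq> XCV j \<Longrightarrow> xst cC xh (\<eta>(v := a)) j = xst cC xh \<eta> j"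
  unfolding xst_def by (simp add: vec_eq_iff)

lemma yst_update: "(\<And>i. v \<noteq> YV j i) \<Longrightarrow> yst (\<eta>(v := a)) j = yst \<eta> j"
  unfolding yst_def by (auto simp: vec_eq_iff)

lemma xst_yst_update_VV [simp]:
  "xst cC xh (\<eta>(VV k := a)) = xst cC xh \<eta>" "yst (\<eta>(VV k := a)) = yst \<eta>"
  by (simp_all add: fun_eq_iff xst_update yst_update)

lemma gfun_update_outside_eqn_vars:
  assumes "v \<notin> eqn_vars e"
  shows "gfun S cC fvle fhl fhv fhold eps P Pd Q Tc n xh (\<eta>(v := a)) e
       = gfun S cC fvle fhl fhv fhold eps P Pd Q Tc n xh \<eta> e"
proof (cases e)
  case (AEBAL j)
  with assms obtain k where "v = VV k" "k \<noteq> j" "j - 1 \<noteq> k" by auto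
  then show ?thesis
    using AEBAL by (cases "j = S") (simp_all add: gfun_def Let_def)
qed (use assms in \<open>auto simp: gfun_def Let_def xst_update yst_update yst_def\<close>)

text \<open>The diagonal entry \<open>\<partial> aebal\<^sup>j / \<partial> V\<^sup>j\<close> of the Jacobian.\<close>
definition aebal_dV :: "nat \<Rightarrow> ('c::finite \<Rightarrow> real \<Rightarrow> real \<Rightarrow> real^'c \<Rightarrow> real)
    \<Rightarrow> (real \<Rightarrow> real^'c \<Rightarrow> real) \<Rightarrow> (real \<Rightarrow> real^'c \<Rightarrow> real) \<Rightarrow> real \<Rightarrow> real \<Rightarrow> real
    \<Rightarrow> (nat \<Rightarrow> real) \<Rightarrow> (nat \<Rightarrow> real^'c) \<Rightarrow> (nat \<Rightarrow> real^'c) \<Rightarrow> nat \<Rightarrow> real" where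
  "aebal_dV S fvle fhl fhv eps P Tc T x y j =
     (if j = S then
        - eps * fhl (T S) (x S) - eps * (avec fvle fhl P (T S) (x S) \<bullet> (y S - x S))
        - (1 - eps) * fhl Tc (y S) + fhv (T S) (y S)
      else - fhl (T j) (x j) - avec fvle fhl P (T j) (x j) \<bullet> (y j - x j) + fhv (T j) (y j))"

lemma ball_aebal_dV_iff:
  assumes "2 \<le> S"
  shows "(\<forall>j\<in>{1..S}. aebal_dV S fvle fhl fhv eps P Tc T x y j \<noteq> 0) \<longleftrightarrow>
    - eps * fhl (T S) (x S) - eps * (avec fvle fhl P (T S) (x S) \<bullet> (y S - x S))
      - (1 - eps) * fhl Tc (y S) + fhv (T S) (y S) \<noteq> 0
    \<and> (\<forall>j\<in>{1..S-1}. - fhl (T j) (x j) - avec fvle fhl P (T j) (x j) \<bullet> (y j - x j)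
        + fhv (T j) (y j) \<noteq> 0)"
proof -
  have "{1..S} = insert S {1..S-1}" "\<forall>j\<in>{1..S-1}. j \<noteq> S"
    using assms by auto
  then show ?thesis
    by (auto simp: aebal_dV_def)
qed

context
  fixes S :: nat and cC :: "'c::finite"
    and fvle :: "'c \<Rightarrow> real \<Rightarrow> real \<Rightarrow> real^'c \<Rightarrow> real"
    and fhl fhv :: "real \<Rightarrow> real^'c \<Rightarrow> real" and fhold :: "real \<Rightarrow> real"
    and eps P Pd Q Tc :: real and n :: "nat \<Rightarrow> real" and xh :: "nat \<Rightarrow> real^'c"
begin

private abbreviation (input) "g \<equiv> gfun S cC fvle fhl fhv fhold eps P Pd Q Tc n xh"

lemma jac_outside_eqn_vars: "v \<notin> eqn_vars e \<Longrightarrow> jac g \<eta> e v = 0"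
  by (rule jac_eq_if_has_derivative[where \<phi> = "\<lambda>_. g \<eta> e"])
     (simp_all add: gfun_update_outside_eqn_vars)

lemma jac_unit_entries:
  "jac g \<eta> (XSUM j) (XCV j) = 1" "jac g \<eta> (EDEF j) (HV j) = 1" "jac g \<eta> (YDEF j i) (YV j i) = 1"
  by (rule jac_eq_if_has_derivative[where D = 1], simp add: gfun_def Let_def xst_update yst_def,
      auto intro!: derivative_eq_intros)+

lemma jac_YSUM_TV:
  assumes "\<And>i. (\<lambda>T. fvle i P T (xst cC xh \<eta> j)) differentiable at (\<eta> (TV j))"
  shows "jac g \<eta> (YSUM j) (TV j) = (\<Sum>i\<in>UNIV. pT_vle fvle i P (\<eta> (TV j)) (xst cC xh \<eta> j))"
proof (rule jac_eq_if_has_derivative[where \<phi> = "\<lambda>a. (\<Sum>i\<in>UNIV. fvle i P a (xst cC xh \<eta> j)) - 1"])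
  show "g (\<eta>(TV j := a)) (YSUM j) = (\<Sum>i\<in>UNIV. fvle i P a (xst cC xh \<eta> j)) - 1" for a
    by (simp add: gfun_def Let_def xst_update)
  show "((\<lambda>a. (\<Sum>i\<in>UNIV. fvle i P a (xst cC xh \<eta> j)) - 1) has_real_derivative
      (\<Sum>i\<in>UNIV. pT_vle fvle i P (\<eta> (TV j)) (xst cC xh \<eta> j))) (at (\<eta> (TV j)))"
    using assms unfolding pT_vle_def
    by (auto intro!: derivative_eq_intros simp: DERIV_deriv_iff_real_differentiable)
qed

lemma jac_HOLD_LV:
  assumes "fhold differentiable at (\<eta> (LV (j - 1)))"
  shows "jac g \<eta> (HOLD j) (LV (j - 1)) = - deriv fhold (\<eta> (LV (j - 1)))"
proof (rule jac_eq_if_has_derivative[where \<phi> = "\<lambda>a. n j - fhold a"])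
  show "g (\<eta>(LV (j - 1) := a)) (HOLD j) = n j - fhold a" for a
    by (simp add: gfun_def Let_def)
  show "((\<lambda>a. n j - fhold a) has_real_derivative - deriv fhold (\<eta> (LV (j - 1)))) (at (\<eta> (LV (j - 1))))"
    using assms by (auto intro!: derivative_eq_intros simp: DERIV_deriv_iff_real_differentiable)
qed

lemma gfun_AEBAL_affine_in_VV:
  assumes "2 \<le> S" "1 \<le> j" "j \<le> S"
  shows "g (\<eta>(VV j := a)) (AEBAL j) = g (\<eta>(VV j := 0)) (AEBAL j)
           + a * aebal_dV S fvle fhl fhv eps P Tc (\<lambda>j. \<eta> (TV j)) (xst cC xh \<eta>) (yst \<eta>) j"
proof -
  have "S - 1 \<noteq> S" "j - 1 \<noteq> j" using assms by auto
  consider "j = 1" | "j = S" | "1 < j" "j < S" using assms by linarith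
  then show ?thesis
    using assms \<open>S - 1 \<noteq> S\<close> \<open>j - 1 \<noteq> j\<close> by cases (simp_all add: gfun_def aebal_dV_def Let_def inner_diff_right
        inner_add_right algebra_simps)
qed

lemma jac_AEBAL_VV:
  assumes "2 \<le> S" "1 \<le> j" "j \<le> S"
  shows "jac g \<eta> (AEBAL j) (VV j)
       = aebal_dV S fvle fhl fhv eps P Tc (\<lambda>j. \<eta> (TV j)) (xst cC xh \<eta>) (yst \<eta>) j"
  by (rule jac_eq_if_has_derivative, rule gfun_AEBAL_affine_in_VV[OF assms])
     (auto intro!: derivative_eq_intros)


lemma nonsingular_jac_eliminate_rows:
  assumes "finite R" "finite K" "Rp \<subseteq> R" "pivot_var ` Rp \<subseteq> K" "inj_on pivot_var Rp"
    and "\<forall>e\<in>Rp. eqn_vars e \<inter> K \<subseteq> {pivot_var e}" and "\<forall>e\<in>Rp. jac g \<eta> e (pivot_var e) \<noteq> 0"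
  shows "nonsingular R K (jac g \<eta>) \<longleftrightarrow> nonsingular (R - Rp) (K - pivot_var ` Rp) (jac g \<eta>)"
  using assms finite_subset[OF assms(3,1)]
  by (intro nonsingular_pivot_rows_iff) (auto intro!: jac_outside_eqn_vars)

lemma nonsingular_jac_iff_aebal_dV:
  assumes "2 \<le> S"
    and "\<And>i j. (\<lambda>T. fvle i P T (xst cC xh \<eta> j)) differentiable at (\<eta> (TV j))"
    and "\<And>j. fhold differentiable at (\<eta> (LV j))"
    and "\<forall>j\<in>{1..S-1}. deriv fhold (\<eta> (LV j)) \<noteq> 0"
    and "\<forall>j\<in>{1..S}. (\<Sum>i\<in>UNIV. pT_vle fvle i P (\<eta> (TV j)) (xst cC xh \<eta> j)) \<noteq> 0"
  shows "nonsingular (Eqs S) (Vars S) (jac g \<eta>) \<longleftrightarrow>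
    (\<forall>j\<in>{1..S}. aebal_dV S fvle fhl fhv eps P Tc (\<lambda>j. \<eta> (TV j)) (xst cC xh \<eta>) (yst \<eta>) j \<noteq> 0)"
proof -
  define E1 :: "'c eqn set" where "E1 = XSUM ` {1..S} \<union> HOLD ` {2..S}"
  define E2 :: "'c eqn set" where "E2 = YSUM ` {1..S}"
  define E3 :: "'c eqn set" where "E3 = EDEF ` {1..S} \<union> (\<lambda>(j, i). YDEF j i) ` ({1..S} \<times> UNIV)"
  have V1: "pivot_var ` E1 = XCV ` {1..S} \<union> LV ` {1..S-1}"
  proof -
    have "{2..S} = Suc ` {1..S-1}"
      using assms(1) by (simp add: image_Suc_atLeastAtMost)
    then show ?thesis
      unfolding E1_def image_Un by (simp only: image_image) simp
  qed
  have V2: "pivot_var ` E2 = TV ` {1..S}"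
    unfolding E2_def by (simp add: image_image)
  have V3: "pivot_var ` E3 = HV ` {1..S} \<union> (\<lambda>(j, i). YV j i) ` ({1..S} \<times> UNIV)"
    unfolding E3_def by (force simp: image_Un image_image image_iff)
  have fin: "finite (Eqs S :: 'c eqn set)" "finite (Vars S :: 'c avar set)"
    unfolding Eqs_def Vars_def by simp_all
  have HOLD_pivot: "jac g \<eta> (HOLD j) (LV (j - 1)) \<noteq> 0" if "j \<in> {2..S}" for j
  proof -
    have "j - 1 \<in> {1..S-1}" using that by auto
    then show ?thesis using assms(4) jac_HOLD_LV[where j = j and \<eta> = \<eta>, OF assms(3)] by simp
  qed
  have "nonsingular (Eqs S) (Vars S) (jac g \<eta>)
      \<longleftrightarrow> nonsingular (Eqs S - E1) (Vars S - pivot_var ` E1) (jac g \<eta>)"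
  proof (rule nonsingular_jac_eliminate_rows)
    show "E1 \<subseteq> Eqs S" unfolding E1_def Eqs_def by auto
    show "pivot_var ` E1 \<subseteq> Vars S" unfolding V1 Vars_def by auto
    show "inj_on pivot_var E1" unfolding E1_def inj_on_def by auto
    show "\<forall>e\<in>E1. eqn_vars e \<inter> Vars S \<subseteq> {pivot_var e}" unfolding E1_def by auto
    show "\<forall>e\<in>E1. jac g \<eta> e (pivot_var e) \<noteq> 0"
      unfolding E1_def using HOLD_pivot by (auto simp: jac_unit_entries)
  qed (use fin in auto)
  also have "\<dots> \<longleftrightarrow> nonsingular (Eqs S - E1 - E2) (Vars S - pivot_var ` E1 - pivot_var ` E2) (jac g \<eta>)"
  proof (rule nonsingular_jac_eliminate_rows)
    show "E2 \<subseteq> Eqs S - E1" unfolding E1_def E2_def Eqs_def by auto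
    show "pivot_var ` E2 \<subseteq> Vars S - pivot_var ` E1" unfolding V1 V2 Vars_def by auto
    show "inj_on pivot_var E2" unfolding E2_def inj_on_def by auto
    show "\<forall>e\<in>E2. eqn_vars e \<inter> (Vars S - pivot_var ` E1) \<subseteq> {pivot_var e}"
      unfolding E2_def V1 by auto
    show "\<forall>e\<in>E2. jac g \<eta> e (pivot_var e) \<noteq> 0"
      unfolding E2_def using assms(2,5) by (auto simp: jac_YSUM_TV)
  qed (use fin in auto)
  also have "\<dots> \<longleftrightarrow> nonsingular (Eqs S - E1 - E2 - E3)
      (Vars S - pivot_var ` E1 - pivot_var ` E2 - pivot_var ` E3) (jac g \<eta>)"
  proof (rule nonsingular_jac_eliminate_rows)
    show "E3 \<subseteq> Eqs S - E1 - E2" unfolding E1_def E2_def E3_def Eqs_def by auto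
    show "pivot_var ` E3 \<subseteq> Vars S - pivot_var ` E1 - pivot_var ` E2"
      unfolding V1 V2 V3 Vars_def by auto
    show "inj_on pivot_var E3" unfolding E3_def inj_on_def by auto
    show "\<forall>e\<in>E3. eqn_vars e \<inter> (Vars S - pivot_var ` E1 - pivot_var ` E2) \<subseteq> {pivot_var e}"
      unfolding E3_def V1 V2 by auto
    show "\<forall>e\<in>E3. jac g \<eta> e (pivot_var e) \<noteq> 0"
      unfolding E3_def by (auto simp: jac_unit_entries)
  qed (use fin in auto)
  also have "Eqs S - E1 - E2 - E3 = AEBAL ` {1..S}"
    unfolding E1_def E2_def E3_def Eqs_def by auto
  also have "Vars S - pivot_var ` E1 - pivot_var ` E2 - pivot_var ` E3 = VV ` {1..S}"
    unfolding V1 V2 V3 Vars_def by auto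
  also have "nonsingular (AEBAL ` {1..S}) (VV ` {1..S}) (jac g \<eta>)
      \<longleftrightarrow> (\<forall>j\<in>{1..S}. jac g \<eta> (AEBAL j) (VV j) \<noteq> 0)"
    by (rule nonsingular_lower_triangular_iff) (auto simp: inj_def intro!: jac_outside_eqn_vars)
  finally show ?thesis
    using assms(1) by (simp add: jac_AEBAL_VV)
qed

end


lemma C1_fun_differentiable: "C1_fun f \<Longrightarrow> f differentiable at z"
  unfolding C1_fun_def differentiable_def by blast

lemma C2_fun_differentiable: "C2_fun f \<Longrightarrow> f differentiable at z"
  unfolding C2_fun_def differentiable_def by blast

lemma differentiable_at_second_argument:
  assumes "(\<lambda>(p, t, z). f p t z) differentiable at (p, t, z)"
  shows "(\<lambda>t. f p t z) differentiable at t"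
proof -
  have "(\<lambda>t. (p, t, z)) differentiable at t"
    unfolding differentiable_def by (auto intro!: derivative_intros exI)
  then have "((\<lambda>(p, t, z). f p t z) \<circ> (\<lambda>t. (p, t, z))) differentiable at t"
    by (rule differentiable_chain_at) (simp add: assms)
  then show ?thesis
    by (simp add: o_def)
qed

lemma xst_eta_at: "xst cC (\<lambda>j. x j t) (eta_at V y H T x L cC t) = (\<lambda>j. x j t)"
  unfolding xst_def eta_at_def by (simp add: vec_eq_iff fun_eq_iff)

lemma yst_eta_at: "yst (eta_at V y H T x L cC t) = (\<lambda>j. y j t)"
  unfolding yst_def eta_at_def by (simp add: vec_eq_iff fun_eq_iff)

lemma nonsingular_jac_eta_at_iff:
  fixes fvle :: "'c::finite \<Rightarrow> real \<Rightarrow> real \<Rightarrow> real^'c \<Rightarrow> real"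
  assumes "2 \<le> S" and "\<forall>i. C2_fun (\<lambda>(p, tt, z). fvle i p tt z)" and "C1_fun fhold"
    and "\<forall>j\<in>{1..S-1}. deriv fhold (L j t) \<noteq> 0"
    and "\<forall>j\<in>{1..S}. (\<Sum>i\<in>UNIV. pT_vle fvle i P (T j t) (x j t)) \<noteq> 0"
  shows "nonsingular (Eqs S) (Vars S)
      (jac (gfun S cC fvle fhl fhv fhold eps P Pd Q Tc n (\<lambda>j. x j t)) (eta_at V y H T x L cC t))
    \<longleftrightarrow> (\<forall>j\<in>{1..S}. aebal_dV S fvle fhl fhv eps P Tc (\<lambda>j. T j t) (\<lambda>j. x j t) (\<lambda>j. y j t) j \<noteq> 0)"
proof -
  let ?\<eta> = "eta_at V y H T x L cC t"
  have "nonsingular (Eqs S) (Vars S) (jac (gfun S cC fvle fhl fhv fhold eps P Pd Q Tc n (\<lambda>j. x j t)) ?\<eta>)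
    \<longleftrightarrow> (\<forall>j\<in>{1..S}. aebal_dV S fvle fhl fhv eps P Tc
                      (\<lambda>j. ?\<eta> (TV j)) (xst cC (\<lambda>j. x j t) ?\<eta>) (yst ?\<eta>) j \<noteq> 0)"
  proof (rule nonsingular_jac_iff_aebal_dV)
    show "(\<lambda>T. fvle i P T (xst cC (\<lambda>j. x j t) ?\<eta> j)) differentiable at (?\<eta> (TV j))" for i j
      using assms(2) C2_fun_differentiable
      by (intro differentiable_at_second_argument[where f = "fvle i"]) blast
    show "fhold differentiable at (?\<eta> (LV j))" for j
      using assms(3) by (rule C1_fun_differentiable)
    show "\<forall>j\<in>{1..S-1}. deriv fhold (?\<eta> (LV j)) \<noteq> 0"
      using assms(4) by (simp add: eta_at_def)
    show "\<forall>j\<in>{1..S}. (\<Sum>i\<in>UNIV. pT_vle fvle i P (?\<eta> (TV j)) (xst cC (\<lambda>j. x j t) ?\<eta> j)) \<noteq> 0"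
      using assms(5) by (simp add: eta_at_def xst_eta_at)
  qed (fact assms(1))
  then show ?thesis
    by (simp add: xst_eta_at yst_eta_at eta_at_def)
qed

theorem mainTheorem10:
  fixes S :: nat and cC :: "'c::finite" and I :: "real set"
    and fvle :: "'c \<Rightarrow> real \<Rightarrow> real \<Rightarrow> real^'c \<Rightarrow> real"
    and fhl fhv :: "real \<Rightarrow> real^'c \<Rightarrow> real" and fhold :: "real \<Rightarrow> real"
    and eps P Q Tc :: "real \<Rightarrow> real"
    and n H T V L :: "nat \<Rightarrow> real \<Rightarrow> real" and x y :: "nat \<Rightarrow> real \<Rightarrow> real^'c"
  assumes "S \<ge> 2" and "CARD('c) \<ge> 2" and "is_interval I"
    and "\<forall>i. C2_fun (\<lambda>(p, tt, z). fvle i p tt z)"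
    and "C2_fun (\<lambda>(tt, z). fhl tt z)"
    and "C1_fun (\<lambda>(tt, z). fhv tt z)"
    and "C1_fun fhold"
    and "C1_on I eps" and "C1_on I P" and "C1_on I Q" and "C1_on I Tc"
    and "alt_solution I S cC fvle fhl fhv fhold eps P Q Tc n H T V x y L"
    and "\<forall>t\<in>I. \<forall>j\<in>{1..S-1}. deriv fhold (L j t) \<noteq> 0"
    and "\<forall>t\<in>I. \<forall>j\<in>{1..S}. (\<Sum>i\<in>UNIV. pT_vle fvle i (P t) (T j t) (x j t)) \<noteq> 0"
  shows "(\<forall>t\<in>I. nonsingular (Eqs S) (Vars S)
            (jac (gfun S cC fvle fhl fhv fhold (eps t) (P t) (tder I P t) (Q t) (Tc t)
                    (\<lambda>j. n j t) (\<lambda>j. x j t))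
                 (eta_at V y H T x L cC t)))
     \<longleftrightarrow>
     (\<forall>t\<in>I.
        - eps t * fhl (T S t) (x S t)
        - eps t * (avec fvle fhl (P t) (T S t) (x S t) \<bullet> (y S t - x S t))
        - (1 - eps t) * fhl (Tc t) (y S t) + fhv (T S t) (y S t) \<noteq> 0
      \<and> (\<forall>j\<in>{1..S-1}.
        - fhl (T j t) (x j t) - avec fvle fhl (P t) (T j t) (x j t) \<bullet> (y j t - x j t)
        + fhv (T j t) (y j t) \<noteq> 0))"
proof -
  have "nonsingular (Eqs S) (Vars S)
          (jac (gfun S cC fvle fhl fhv fhold (eps t) (P t) (tder I P t) (Q t) (Tc t)
                  (\<lambda>j. n j t) (\<lambda>j. x j t))
               (eta_at V y H T x L cC t))
      \<longleftrightarrow> (\<forall>j\<in>{1..S}. aebal_dV S fvle fhl fhv (eps t) (P t) (Tc t)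
                        (\<lambda>j. T j t) (\<lambda>j. x j t) (\<lambda>j. y j t) j \<noteq> 0)"
    if "t \<in> I" for t
    using assms(1,4,7,13,14) that by (intro nonsingular_jac_eta_at_iff) auto
  then show ?thesis
    unfolding ball_aebal_dV_iff[OF assms(1)] by blast
qed

end
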